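(* Let $M$ be a nonempty closed, real algebraic, irreducible subset of $V$ which is $A$-invariant. Then there exists $v\in M$ such that $\mu_{\mathfrak a}(M)=C_I$ with $I=\mathrm{supp}_v$; in particular $\mu_{\mathfrak a}(M)$ is a polyhedral.
   Context: Let $V$ be a finite-dimensional real vector space with a scalar product $\langle\cdot,\cdot\rangle$. Let $G\subset\mathrm{GL}(V)$ be a connected closed subgroup, closed under transpose, with Lie algebra $\mathfrak g$, $G=K\exp(\mathfrak p)$ with $K=G\cap\mathrm O(V)$, $\mathfrak p=\mathfrak g\cap\mathrm{Sym}(V)$. Let $\mathfrak a\subset\mathfrak p$ be an Abelian subalgebra, $A=\exp(\mathfrak a)$, and $\mu_{\mathfrak a}:V\to\mathfrak a^*$, $\mu_{\mathfrak a}(x)(\xi)=\langle\xi x,x\rangle$. Fix an orthonormal basis $v_1,\dots,v_n$ of $V$ simultaneously diagonalizing $\mathfrak a$, with $\xi v_i=\alpha_i(\xi)v_i$, $\alpha_i\in\mathfrak a^*$. For $v=\sum x_iv_i$, $\mathrm{supp}_v=\{i:x_i\neq0\}$; for $I\subset\{1,\dots,n\}$, $C_I=\{\sum_{i\in I}s_i\alpha_i:s_i\ge0\}$. Irreducibility is with respect to the Zariski topology. A polyhedral is an intersection of finitely many closed linear half-spaces. *)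

theory Defs
  imports "HOL-Analysis.Analysis"
begin

text \<open>V is modelled as real^'n with the standard scalar product; endomorphisms of V
 as matrices real^'n^'n.\<close>

primrec matpow :: "real^'n^'n \<Rightarrow> nat \<Rightarrow> real^'n^'n" where
  "matpow X 0 = mat 1"
| "matpow X (Suc k) = X ** matpow X k"

definition mexp :: "real^'n^'n \<Rightarrow> real^'n^'n" where
  "mexp X = (\<Sum>k. (1 / fact k) *\<^sub>R matpow X k)"

inductive_set poly_fun :: "(real^'n \<Rightarrow> real) set" where
  const: "(\<lambda>x. c) \<in> poly_fun"
| coord: "(\<lambda>x. x $ i) \<in> poly_fun"
| add: "p \<in> poly_fun \<Longrightarrow> q \<in> poly_fun \<Longrightarrow> (\<lambda>x. p x + q x) \<in> poly_fun"
| mult: "p \<in> poly_fun \<Longrightarrow> q \<in> poly_fun \<Longrightarrow> (\<lambda>x. p x * q x) \<in> poly_fun"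

text \<open>Zariski closed (= real algebraic) subsets: common zero sets of polynomials.\<close>
definition zariski_closed :: "(real^'n) set \<Rightarrow> bool" where
  "zariski_closed Z \<longleftrightarrow> (\<exists>P \<subseteq> poly_fun. Z = {x. \<forall>p\<in>P. p x = 0})"

definition zariski_irreducible :: "(real^'n) set \<Rightarrow> bool" where
  "zariski_irreducible M \<longleftrightarrow> M \<noteq> {} \<and>
     (\<forall>Z1 Z2. zariski_closed Z1 \<longrightarrow> zariski_closed Z2 \<longrightarrow> M \<subseteq> Z1 \<union> Z2 \<longrightarrow>
        M \<subseteq> Z1 \<or> M \<subseteq> Z2)"

text \<open>Moment map, as an element of the dual of the subspace a (functional restricted to a).\<close>
definition moment_map :: "(real^'n^'n) set \<Rightarrow> real^'n \<Rightarrow> (real^'n^'n \<Rightarrow> real)" where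
  "moment_map \<aa> x = restrict (\<lambda>\<xi>. inner (\<xi> *v x) x) \<aa>"

definition supp :: "('n \<Rightarrow> real^'n) \<Rightarrow> real^'n \<Rightarrow> 'n set" where
  "supp b v = {i. inner v (b i) \<noteq> 0}"

definition cone :: "(real^'n^'n) set \<Rightarrow> ('n \<Rightarrow> real^'n^'n \<Rightarrow> real) \<Rightarrow> 'n set
     \<Rightarrow> (real^'n^'n \<Rightarrow> real) set" where
  "cone \<aa> \<alpha> I = {restrict (\<lambda>\<xi>. \<Sum>i\<in>I. s i * \<alpha> i \<xi>) \<aa> | s. \<forall>i\<in>I. s i \<ge> 0}"

end

theory Submission
  imports Defs
begin

(* Since \<aa> is diagonal in the basis b, the moment map is
   \<mu>(x)(\<xi>) = \<Sum>\<^sub>i \<alpha>\<^sub>i(\<xi>) <x, b\<^sub>i>\<^sup>2.  Hence \<mu>(M) lies in C\<^sub>I once every point of M is supported in I,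
   and irreducibility provides a v \<in> M whose support contains the support of every point of M:
   the coordinate hyperplanes not containing M cannot cover it.
   Conversely, for \<lambda> = \<Sum>\<^sub>i\<^sub>\<in>\<^sub>I s\<^sub>i \<alpha>\<^sub>i with s\<^sub>i \<ge> 0, the function f(\<xi>) = |exp(\<xi>) v|\<^sup>2/2 - \<lambda>(\<xi>) on \<aa>
   is bounded below and controls |exp(\<xi>) v|, and its derivative in direction \<eta> is
   \<mu>(exp(\<xi>) v)(\<eta>) - \<lambda>(\<eta>).  Minimising f + \<epsilon> |.| gives points \<xi>\<^sub>k with f(\<xi>\<^sub>k) \<le> f(0) at which
   this derivative is at most 1/k; the bounded sequence exp(\<xi>\<^sub>k) v in M then has a limit point
   in the closed set M, and its moment is \<lambda>. *)

definition outer :: "real^'n \<Rightarrow> real^'n^'n" where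
  "outer u = (\<chi> r c. u$r * u$c)"

lemma outer_mult: "outer u *v x = inner u x *\<^sub>R u"
  by (simp add: outer_def matrix_vector_mult_def inner_vec_def vec_eq_iff sum_distrib_left mult_ac)

lemma sum_matrix_vector_mult: "(\<Sum>i\<in>S. A i) *v x = (\<Sum>i\<in>S. A i *v x)"
  by (induction S rule: infinite_finite_induct) (auto simp: matrix_vector_mult_add_rdistrib)

lemma matpow_eigenvector:
  assumes "X *v u = c *\<^sub>R u"
  shows "matpow X k *v u = (c ^ k) *\<^sub>R u"
  by (induction k) (auto simp: matrix_vector_mul_assoc[symmetric] matrix_vector_mult_scaleR assms)

locale orthonormal_frame =
  fixes b :: "'n::finite \<Rightarrow> real^'n"
  assumes inner_frame: "inner (b i) (b j) = (if i = j then 1 else 0)"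
begin

lemma frame_expansion: "x = (\<Sum>i\<in>UNIV. inner x (b i) *\<^sub>R b i)"
proof -
  define B :: "real^'n^'n" where "B = (\<chi> i. b i)"
  have "B ** transpose B = mat 1"
    by (simp add: B_def matrix_matrix_mult_def transpose_def mat_def inner_vec_def vec_eq_iff
        flip: inner_frame)
  then have "transpose B ** B = mat 1"
    using matrix_left_right_inverse by blast
  then have "x = transpose B *v (B *v x)"
    by (simp add: matrix_vector_mul_assoc)
  also have "B *v x = (\<chi> i. inner x (b i))"
    by (simp add: B_def matrix_vector_mult_def inner_vec_def vec_eq_iff mult.commute)
  also have "transpose B *v (\<chi> i. inner x (b i)) = (\<Sum>i\<in>UNIV. inner x (b i) *\<^sub>R b i)"
    by (simp add: matrix_mult_sum B_def row_def scalar_mult_eq_scaleR)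
  finally show ?thesis .
qed

lemma inner_frame_sum: "inner (\<Sum>i\<in>UNIV. d i *\<^sub>R b i) (b j) = d j"
proof -
  have "inner (\<Sum>i\<in>UNIV. d i *\<^sub>R b i) (b j) = (\<Sum>i\<in>UNIV. d i * inner (b i) (b j))"
    by (simp add: inner_sum_left)
  also have "\<dots> = (\<Sum>i\<in>UNIV. if i = j then d j else 0)"
    by (rule sum.cong) (auto simp: inner_frame)
  finally show ?thesis
    by simp
qed

lemma norm_frame: "(norm x)\<^sup>2 = (\<Sum>i\<in>UNIV. (inner x (b i))\<^sup>2)"
proof -
  have "(norm x)\<^sup>2 = inner x (\<Sum>i\<in>UNIV. inner x (b i) *\<^sub>R b i)"
    by (simp flip: frame_expansion add: power2_norm_eq_inner)
  then show ?thesis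
    by (simp add: inner_sum_right power2_eq_square)
qed

lemma sum_outer_frame: "(\<Sum>i\<in>UNIV. f i *\<^sub>R outer (b i)) *v b j = f j *\<^sub>R b j"
proof -
  have "(\<Sum>i\<in>UNIV. f i *\<^sub>R outer (b i)) *v b j = (\<Sum>i\<in>UNIV. (f i * inner (b i) (b j)) *\<^sub>R b i)"
    by (simp add: sum_matrix_vector_mult scaleR_matrix_vector_assoc[symmetric] outer_mult)
  also have "\<dots> = (\<Sum>i\<in>UNIV. if i = j then f j *\<^sub>R b j else 0)"
    by (rule sum.cong) (auto simp: inner_frame)
  finally show ?thesis
    by simp
qed

lemma matrix_eq_on_frame:
  fixes A B :: "real^'n^'m::finite"
  assumes "\<And>i. A *v b i = B *v b i"
  shows "A = B"
proof (rule iffD2[OF matrix_eq], rule allI)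
  fix x
  have "A *v x = (\<Sum>i\<in>UNIV. inner x (b i) *\<^sub>R (A *v b i))" for A :: "real^'n^'m"
    by (subst frame_expansion) (simp add: linear_sum[OF matrix_vector_mul_linear] matrix_vector_mult_scaleR)
  from this[of A] this[of B] show "A *v x = B *v x"
    by (simp only: assms)
qed

context
  fixes A :: "real^'n^'n" and d :: "'n \<Rightarrow> real"
  assumes diagonal: "\<And>i. A *v b i = d i *\<^sub>R b i"
begin

lemma diagonal_mult: "A *v x = (\<Sum>i\<in>UNIV. (d i * inner x (b i)) *\<^sub>R b i)"
  by (subst frame_expansion[of x])
    (simp add: linear_sum[OF matrix_vector_mul_linear] matrix_vector_mult_scaleR diagonal mult.commute)

lemma diagonal_coordinate: "inner (A *v x) (b j) = d j * inner x (b j)"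
  by (simp add: diagonal_mult inner_frame_sum)

lemma diagonal_quadratic_form: "inner (A *v x) x = (\<Sum>i\<in>UNIV. d i * (inner x (b i))\<^sup>2)"
proof -
  have "inner (A *v x) x = (\<Sum>i\<in>UNIV. d i * inner x (b i) * inner (b i) x)"
    by (simp add: diagonal_mult inner_sum_left)
  then show ?thesis
    by (simp add: power2_eq_square inner_commute mult.assoc)
qed

lemma matpow_diagonal: "matpow A k = (\<Sum>i\<in>UNIV. (d i ^ k) *\<^sub>R outer (b i))"
  by (rule matrix_eq_on_frame) (simp add: matpow_eigenvector diagonal sum_outer_frame)

lemma mexp_diagonal: "mexp A *v b j = exp (d j) *\<^sub>R b j"
proof -
  have "(\<lambda>k. d i ^ k / fact k) sums exp (d i)" for i
    using exp_converges[of "d i"] by (simp add: divide_inverse_commute)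
  then have "(\<lambda>k. (1 / fact k) *\<^sub>R matpow A k) sums (\<Sum>i\<in>UNIV. exp (d i) *\<^sub>R outer (b i))"
    unfolding matpow_diagonal scaleR_sum_right scaleR_scaleR
    by (intro sums_sum sums_scaleR_left) simp
  then have "mexp A = (\<Sum>i\<in>UNIV. exp (d i) *\<^sub>R outer (b i))"
    by (simp add: mexp_def sums_iff)
  then show ?thesis
    by (simp add: sum_outer_frame)
qed

end

end

lemma poly_fun_sum:
  "finite S \<Longrightarrow> (\<And>j. j \<in> S \<Longrightarrow> f j \<in> poly_fun) \<Longrightarrow> (\<lambda>x. \<Sum>j\<in>S. f j x) \<in> poly_fun"
  by (induction S rule: finite_induct) (auto intro: poly_fun.const poly_fun.add)

lemma poly_fun_inner: "(\<lambda>x. inner x u) \<in> poly_fun"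
  unfolding inner_vec_def
  by (rule poly_fun_sum) (auto intro: poly_fun.mult poly_fun.coord poly_fun.const)

lemma continuous_on_poly_fun: "p \<in> poly_fun \<Longrightarrow> continuous_on UNIV p"
  by (induction rule: poly_fun.induct) (auto intro!: continuous_intros)

lemma zariski_closed_imp_closed:
  assumes "zariski_closed Z"
  shows "closed Z"
proof -
  obtain P where P: "P \<subseteq> poly_fun" "Z = (\<Inter>p\<in>P. {x. p x = 0})"
    using assms unfolding zariski_closed_def by blast
  have "closed {x. p x = 0}" if "p \<in> P" for p
    using P that by (intro closed_Collect_eq continuous_on_poly_fun continuous_intros) auto
  then show ?thesis
    using P by auto
qed

lemma zariski_closed_empty: "zariski_closed {}"
  unfolding zariski_closed_def by (rule exI[of _ "{\<lambda>x. 1}"]) (auto intro: poly_fun.const)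

lemma zariski_closed_hyperplane: "zariski_closed {x. inner x u = 0}"
  unfolding zariski_closed_def by (rule exI[of _ "{\<lambda>x. inner x u}"]) (auto intro: poly_fun_inner)

lemma zariski_closed_Un:
  assumes "zariski_closed Z1" "zariski_closed Z2"
  shows "zariski_closed (Z1 \<union> Z2)"
proof -
  obtain P where P: "P \<subseteq> poly_fun" "Z1 = {x. \<forall>p\<in>P. p x = 0}"
    using assms(1) unfolding zariski_closed_def by blast
  obtain Q where Q: "Q \<subseteq> poly_fun" "Z2 = {x. \<forall>q\<in>Q. q x = 0}"
    using assms(2) unfolding zariski_closed_def by blast
  define R where "R = {(\<lambda>x. p x * q x) | p q. p \<in> P \<and> q \<in> Q}"
  have "R \<subseteq> poly_fun"
    using P Q by (auto simp: R_def intro: poly_fun.mult)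
  moreover have "Z1 \<union> Z2 = {x. \<forall>r\<in>R. r x = 0}"
  proof (intro equalityI subsetI)
    fix x assume "x \<in> {x. \<forall>r\<in>R. r x = 0}"
    then have x: "\<And>r. r \<in> R \<Longrightarrow> r x = 0"
      by simp
    have "p x = 0 \<or> q x = 0" if "p \<in> P" "q \<in> Q" for p q
      using x[of "\<lambda>x. p x * q x"] that by (auto simp: R_def)
    then show "x \<in> Z1 \<union> Z2"
      using P Q by blast
  qed (use P Q in \<open>auto simp: R_def\<close>)
  ultimately show ?thesis
    unfolding zariski_closed_def by blast
qed

lemma zariski_irreducible_not_covered:
  assumes "zariski_irreducible M" "finite J"
    and "\<And>j. j \<in> J \<Longrightarrow> zariski_closed (Z j)" "\<And>j. j \<in> J \<Longrightarrow> \<not> M \<subseteq> Z j"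
  shows "\<not> M \<subseteq> (\<Union>j\<in>J. Z j)"
  using assms(2-)
proof (induction J rule: finite_induct)
  case empty
  then show ?case
    using assms(1) by (simp add: zariski_irreducible_def)
next
  case (insert j J)
  have "zariski_closed (\<Union>j\<in>J. Z j)"
    using insert.hyps insert.prems(1)
    by (induction J rule: finite_induct) (auto intro: zariski_closed_empty zariski_closed_Un)
  moreover have "zariski_closed (Z j)" "\<not> M \<subseteq> Z j"
    using insert.prems by auto
  ultimately have "\<not> M \<subseteq> Z j \<union> (\<Union>j\<in>J. Z j)"
    using assms(1) insert.IH insert.prems unfolding zariski_irreducible_def by blast
  then show ?case
    by simp
qed

lemma zariski_irreducible_generic_supp:
  assumes "zariski_irreducible M"
  obtains v where "v \<in> M" "\<And>x. x \<in> M \<Longrightarrow> supp b x \<subseteq> supp b v"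
proof -
  define J where "J = (\<Union>x\<in>M. supp b x)"
  have "\<not> M \<subseteq> (\<Union>j\<in>J. {x. inner x (b j) = 0})"
    by (rule zariski_irreducible_not_covered[OF assms])
      (auto simp: J_def supp_def zariski_closed_hyperplane)
  then obtain v where "v \<in> M" "J \<subseteq> supp b v"
    by (auto simp: supp_def)
  then show thesis
    by (intro that[of v]) (auto simp: J_def)
qed

lemma DERIV_nonneg_at_right_minimum:
  fixes g :: "real \<Rightarrow> real"
  assumes "(g has_real_derivative d) (at 0)" and "\<And>t. t > 0 \<Longrightarrow> g 0 \<le> g t"
  shows "d \<ge> 0"
proof (rule ccontr)
  assume "\<not> d \<ge> 0"
  then obtain \<delta> where \<delta>: "\<delta> > 0" "\<And>t. t > 0 \<Longrightarrow> t < \<delta> \<Longrightarrow> g (0 + t) < g 0"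
    using DERIV_neg_dec_right[OF assms(1)] by force
  then have "g (\<delta> / 2) < g 0"
    by simp
  with assms(2)[of "\<delta> / 2"] \<delta>(1) show False
    by simp
qed

lemma penalized_minimum_exists:
  fixes f :: "'a::euclidean_space \<Rightarrow> real"
  assumes "closed S" "0 \<in> S" "continuous_on S f" "\<And>x. x \<in> S \<Longrightarrow> m \<le> f x" "\<epsilon> > 0"
  obtains x where "x \<in> S" "\<And>y. y \<in> S \<Longrightarrow> f x + \<epsilon> * norm x \<le> f y + \<epsilon> * norm y"
proof -
  define R where "R = (f 0 - m) / \<epsilon>"
  define T where "T = cball 0 R \<inter> S"
  have "compact T"
    unfolding T_def using assms(1) by (rule compact_Int_closed[OF compact_cball])
  moreover have "0 \<in> T"
    using assms(2,5) assms(4)[of 0] by (simp add: T_def R_def)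
  moreover have "continuous_on T (\<lambda>x. f x + \<epsilon> * norm x)"
    using continuous_on_subset[OF assms(3)] by (intro continuous_intros) (auto simp: T_def)
  ultimately obtain x where x: "x \<in> T" "\<And>y. y \<in> T \<Longrightarrow> f x + \<epsilon> * norm x \<le> f y + \<epsilon> * norm y"
    using continuous_attains_inf[of T "\<lambda>x. f x + \<epsilon> * norm x"] by auto
  have "f x + \<epsilon> * norm x \<le> f y + \<epsilon> * norm y" if "y \<in> S" for y
  proof (cases "y \<in> T")
    case False
    then have "\<epsilon> * R \<le> \<epsilon> * norm y"
      using that assms(5) by (simp add: T_def)
    then have "f 0 \<le> f y + \<epsilon> * norm y"
      using assms(4)[OF that] assms(5) by (simp add: R_def)
    then show ?thesis
      using x \<open>0 \<in> T\<close> by force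
  qed (use x in auto)
  moreover have "x \<in> S"
    using x(1) by (simp add: T_def)
  ultimately show thesis
    using that by blast
qed

text \<open>As in Ekeland's variational principle, the point is a minimiser of \<open>f + \<epsilon> \<parallel>\<cdot>\<parallel>\<close> on \<open>S\<close>.\<close>

lemma approximate_critical_point:
  fixes f :: "'a::euclidean_space \<Rightarrow> real"
  assumes S: "subspace S" and "continuous_on S f" "\<And>x. x \<in> S \<Longrightarrow> m \<le> f x" "\<epsilon> > 0"
    and deriv: "\<And>x \<eta>. x \<in> S \<Longrightarrow> \<eta> \<in> S \<Longrightarrow> ((\<lambda>t. f (x + t *\<^sub>R \<eta>)) has_real_derivative D x \<eta>) (at 0)"
    and D_odd: "\<And>x \<eta>. D x (-\<eta>) = - D x \<eta>"
  obtains x where "x \<in> S" "f x \<le> f 0" "\<And>\<eta>. \<eta> \<in> S \<Longrightarrow> \<bar>D x \<eta>\<bar> \<le> \<epsilon> * norm \<eta>"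
proof -
  obtain x where x: "x \<in> S" and min: "\<And>y. y \<in> S \<Longrightarrow> f x + \<epsilon> * norm x \<le> f y + \<epsilon> * norm y"
    using penalized_minimum_exists[OF closed_subspace[OF S] subspace_0[OF S] assms(2-4)] by metis
  have lower: "- (\<epsilon> * norm \<eta>) \<le> D x \<eta>" if \<eta>: "\<eta> \<in> S" for \<eta>
  proof -
    have "((\<lambda>t. f (x + t *\<^sub>R \<eta>) + \<epsilon> * norm \<eta> * t) has_real_derivative D x \<eta> + \<epsilon> * norm \<eta> * 1) (at 0)"
      by (intro DERIV_add deriv[OF x \<eta>] DERIV_cmult DERIV_ident)
    moreover have "f (x + 0 *\<^sub>R \<eta>) + \<epsilon> * norm \<eta> * 0 \<le> f (x + t *\<^sub>R \<eta>) + \<epsilon> * norm \<eta> * t"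
      if "t > 0" for t
    proof -
      have "f x + \<epsilon> * norm x \<le> f (x + t *\<^sub>R \<eta>) + \<epsilon> * norm (x + t *\<^sub>R \<eta>)"
        using min S x \<eta> by (simp add: subspace_add subspace_scale)
      also have "\<dots> \<le> f (x + t *\<^sub>R \<eta>) + \<epsilon> * (norm x + t * norm \<eta>)"
        using norm_triangle_ineq[of x "t *\<^sub>R \<eta>"] \<open>t > 0\<close> \<open>\<epsilon> > 0\<close> by simp
      finally show ?thesis
        by (simp add: algebra_simps)
    qed
    ultimately have "D x \<eta> + \<epsilon> * norm \<eta> * 1 \<ge> 0"
      by (rule DERIV_nonneg_at_right_minimum)
    then show ?thesis
      by simp
  qed
  show thesis
  proof (rule that[OF x])
    show "f x \<le> f 0"
    proof -
      have "0 \<le> \<epsilon> * norm x"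
        using \<open>\<epsilon> > 0\<close> by simp
      then show ?thesis
        using min[OF subspace_0[OF S]] by simp
    qed
    show "\<bar>D x \<eta>\<bar> \<le> \<epsilon> * norm \<eta>" if "\<eta> \<in> S" for \<eta>
      using lower[OF that] lower[of "-\<eta>"] that S D_odd by (simp add: subspace_neg)
  qed
qed

lemma exp_minus_linear_bounded_below:
  fixes C s :: real
  assumes "C > 0" "s \<ge> 0"
  shows "\<exists>m. \<forall>y. m \<le> C * exp y - s * y"
proof (cases "s = 0")
  case True
  then show ?thesis
    using assms by (intro exI[of _ 0]) simp
next
  case False
  with assms have "s > 0"
    by simp
  have "s * (1 + ln (C / s)) \<le> C * exp y - s * y" for y
  proof -
    have "s * (1 + (y + ln (C / s))) \<le> s * exp (y + ln (C / s))"
      using \<open>s > 0\<close> by (intro mult_left_mono exp_ge_add_one_self) auto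
    also have "\<dots> = C * exp y"
      using \<open>s > 0\<close> assms by (simp add: exp_add)
    finally show ?thesis
      by (simp add: algebra_simps)
  qed
  then show ?thesis
    by blast
qed

lemma exp_sum_coercive:
  fixes C s :: "'i \<Rightarrow> real"
  assumes "\<And>i. i \<in> I \<Longrightarrow> C i > 0" "\<And>i. i \<in> I \<Longrightarrow> s i \<ge> 0"
  shows "\<exists>m. \<forall>y. (\<Sum>i\<in>I. C i * exp (2 * y i)) / 4 + m \<le> (\<Sum>i\<in>I. C i / 2 * exp (2 * y i) - s i * y i)"
proof -
  have "\<forall>i\<in>I. \<exists>m. \<forall>z. m \<le> C i / 4 * exp z - s i / 2 * z"
    using assms by (intro ballI exp_minus_linear_bounded_below) auto
  then obtain m where m: "\<And>i z. i \<in> I \<Longrightarrow> m i \<le> C i / 4 * exp z - s i / 2 * z"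
    by metis
  have "(\<Sum>i\<in>I. C i * exp (2 * y i)) / 4 + (\<Sum>i\<in>I. m i) \<le> (\<Sum>i\<in>I. C i / 2 * exp (2 * y i) - s i * y i)"
    for y :: "'i \<Rightarrow> real"
  proof -
    have "(\<Sum>i\<in>I. C i * exp (2 * y i)) / 4 + (\<Sum>i\<in>I. m i) = (\<Sum>i\<in>I. C i / 4 * exp (2 * y i) + m i)"
      by (simp add: sum.distrib sum_divide_distrib)
    also have "\<dots> \<le> (\<Sum>i\<in>I. C i / 2 * exp (2 * y i) - s i * y i)"
    proof (rule sum_mono)
      fix i assume "i \<in> I"
      show "C i / 4 * exp (2 * y i) + m i \<le> C i / 2 * exp (2 * y i) - s i * y i"
        using m[OF \<open>i \<in> I\<close>, of "2 * y i"] by simp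
    qed
    finally show ?thesis .
  qed
  then show ?thesis
    by blast
qed

lemma exp_sum_line_derivative:
  fixes a :: "'i \<Rightarrow> 'a::real_vector \<Rightarrow> real"
  assumes "\<And>i. linear (a i)"
  shows "((\<lambda>t. \<Sum>i\<in>I. C i / 2 * exp (2 * a i (\<xi> + t *\<^sub>R \<eta>)) - s i * a i (\<xi> + t *\<^sub>R \<eta>))
    has_real_derivative (\<Sum>i\<in>I. (C i * exp (2 * a i \<xi>) - s i) * a i \<eta>)) (at 0)"
proof -
  have "a i (\<xi> + t *\<^sub>R \<eta>) = a i \<xi> + t * a i \<eta>" for i t
    using assms[of i] by (simp add: linear_add linear_scale)
  then show ?thesis
    by (simp only:) (rule DERIV_sum, (rule derivative_eq_intros refl | simp)+, simp add: algebra_simps)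
qed

lemma exp_sum_critical_sequence:
  fixes a :: "'i \<Rightarrow> 'a::euclidean_space \<Rightarrow> real"
  assumes S: "subspace S" and lin: "\<And>i. linear (a i)"
    and C: "\<And>i. i \<in> I \<Longrightarrow> C i > 0" and s: "\<And>i. i \<in> I \<Longrightarrow> s i \<ge> 0"
  obtains \<xi> B where "\<And>k. \<xi> k \<in> S" "\<And>k. (\<Sum>i\<in>I. C i * exp (2 * a i (\<xi> k))) \<le> B"
    "\<And>\<eta>. \<eta> \<in> S \<Longrightarrow> (\<lambda>k. \<Sum>i\<in>I. C i * exp (2 * a i (\<xi> k)) * a i \<eta>) \<longlonglongrightarrow> (\<Sum>i\<in>I. s i * a i \<eta>)"
proof -
  define f where "f \<xi> = (\<Sum>i\<in>I. C i / 2 * exp (2 * a i \<xi>) - s i * a i \<xi>)" for \<xi>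
  define D where "D \<xi> \<eta> = (\<Sum>i\<in>I. (C i * exp (2 * a i \<xi>) - s i) * a i \<eta>)" for \<xi> \<eta>
  obtain m where
    "\<forall>y. (\<Sum>i\<in>I. C i * exp (2 * y i)) / 4 + m \<le> (\<Sum>i\<in>I. C i / 2 * exp (2 * y i) - s i * y i)"
    using exp_sum_coercive[OF C s] ..
  from this[rule_format, of "\<lambda>i. a i _"] have m: "\<And>\<xi>. (\<Sum>i\<in>I. C i * exp (2 * a i \<xi>)) / 4 + m \<le> f \<xi>"
    by (simp add: f_def)
  have f_lower: "m \<le> f \<xi>" for \<xi>
  proof -
    have "0 \<le> (\<Sum>i\<in>I. C i * exp (2 * a i \<xi>))"
      using C by (intro sum_nonneg) (simp add: less_imp_le)
    then show ?thesis
      using m[of \<xi>] by simp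
  qed
  have "continuous_on S (a i)" for i
    using lin[of i] by (simp add: linear_continuous_on linear_conv_bounded_linear)
  then have f_cont: "continuous_on S f"
    unfolding f_def by (intro continuous_intros)
  have f_deriv: "((\<lambda>t. f (\<xi> + t *\<^sub>R \<eta>)) has_real_derivative D \<xi> \<eta>) (at 0)" for \<xi> \<eta>
    unfolding f_def D_def by (rule exp_sum_line_derivative[OF lin])
  have D_odd: "D \<xi> (-\<eta>) = - D \<xi> \<eta>" for \<xi> \<eta>
    using lin by (simp add: D_def linear_neg sum_negf)
  have "\<exists>\<xi>. \<xi> \<in> S \<and> f \<xi> \<le> f 0 \<and> (\<forall>\<eta>\<in>S. \<bar>D \<xi> \<eta>\<bar> \<le> inverse (Suc k) * norm \<eta>)" for k :: nat
    by (rule approximate_critical_point[OF S f_cont f_lower _ f_deriv D_odd, of "inverse (Suc k)"]) auto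
  then obtain \<xi> where \<xi>: "\<And>k. \<xi> k \<in> S" "\<And>k. f (\<xi> k) \<le> f 0"
    "\<And>k \<eta>. \<eta> \<in> S \<Longrightarrow> \<bar>D (\<xi> k) \<eta>\<bar> \<le> inverse (Suc k) * norm \<eta>"
    by metis
  show thesis
  proof (rule that[OF \<xi>(1)])
    show "(\<Sum>i\<in>I. C i * exp (2 * a i (\<xi> k))) \<le> 4 * (f 0 - m)" for k
      using m[of "\<xi> k"] \<xi>(2)[of k] by simp
    fix \<eta> assume "\<eta> \<in> S"
    have "(\<lambda>k. D (\<xi> k) \<eta>) \<longlonglongrightarrow> 0"
      using \<xi>(3)[OF \<open>\<eta> \<in> S\<close>]
      by (intro Lim_transform_bound[OF _ tendsto_mult_left_zero[OF LIMSEQ_inverse_real_of_nat,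
            of "norm \<eta>"]]) simp
    then have "(\<lambda>k. D (\<xi> k) \<eta> + (\<Sum>i\<in>I. s i * a i \<eta>)) \<longlonglongrightarrow> 0 + (\<Sum>i\<in>I. s i * a i \<eta>)"
      by (intro tendsto_add tendsto_const)
    then show "(\<lambda>k. \<Sum>i\<in>I. C i * exp (2 * a i (\<xi> k)) * a i \<eta>) \<longlonglongrightarrow> (\<Sum>i\<in>I. s i * a i \<eta>)"
      by (simp add: D_def left_diff_distrib sum_subtractf)
  qed
qed

lemma moment_map_limit_in_closed:
  fixes xs :: "nat \<Rightarrow> real^'n"
  assumes "closed M" "\<And>k. xs k \<in> M" "bounded (range xs)"
    and lim: "\<And>\<eta>. \<eta> \<in> \<aa> \<Longrightarrow> (\<lambda>k. inner (\<eta> *v xs k) (xs k)) \<longlonglongrightarrow> target \<eta>"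
  obtains l where "l \<in> M" "moment_map \<aa> l = restrict target \<aa>"
proof -
  obtain l r where r: "strict_mono r" and l: "(xs \<circ> r) \<longlonglongrightarrow> l"
    using bounded_imp_convergent_subsequence[OF assms(3)] by blast
  have "l \<in> M"
    using closed_sequentially[OF assms(1) _ l] assms(2) by simp
  moreover have "inner (\<eta> *v l) l = target \<eta>" if "\<eta> \<in> \<aa>" for \<eta>
  proof (rule LIMSEQ_unique)
    show "(\<lambda>k. inner (\<eta> *v xs (r k)) (xs (r k))) \<longlonglongrightarrow> inner (\<eta> *v l) l"
      using l unfolding comp_def
      by (intro tendsto_intros bounded_linear.tendsto[OF matrix_vector_mul_bounded_linear])
    show "(\<lambda>k. inner (\<eta> *v xs (r k)) (xs (r k))) \<longlonglongrightarrow> target \<eta>"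
      using LIMSEQ_subseq_LIMSEQ[OF lim[OF that] r] by (simp add: comp_def)
  qed
  ultimately show thesis
    by (intro that[of l]) (auto simp: moment_map_def intro: restrict_ext)
qed

context orthonormal_frame
begin

lemma moment_map_image_subset_cone:
  assumes diag: "\<And>i \<xi>. \<xi> \<in> \<aa> \<Longrightarrow> \<xi> *v b i = \<alpha> i \<xi> *\<^sub>R b i"
    and supp: "\<And>x. x \<in> M \<Longrightarrow> supp b x \<subseteq> I"
  shows "moment_map \<aa> ` M \<subseteq> cone \<aa> \<alpha> I"
proof
  fix y assume "y \<in> moment_map \<aa> ` M"
  then obtain x where x: "x \<in> M" and y: "y = moment_map \<aa> x"
    by blast
  have "inner (\<xi> *v x) x = (\<Sum>i\<in>I. (inner x (b i))\<^sup>2 * \<alpha> i \<xi>)" if "\<xi> \<in> \<aa>" for \<xi>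
  proof -
    have "inner (\<xi> *v x) x = (\<Sum>i\<in>UNIV. \<alpha> i \<xi> * (inner x (b i))\<^sup>2)"
      using diag[OF that] by (rule diagonal_quadratic_form)
    also have "\<dots> = (\<Sum>i\<in>I. (inner x (b i))\<^sup>2 * \<alpha> i \<xi>)"
      using supp[OF x] by (intro sum.mono_neutral_cong_right) (auto simp: supp_def)
    finally show ?thesis .
  qed
  then show "y \<in> cone \<aa> \<alpha> I"
    unfolding cone_def moment_map_def y
    by (intro CollectI exI[of _ "\<lambda>i. (inner x (b i))\<^sup>2"]) (auto intro: restrict_ext)
qed

lemma weighted_sum_sq_mexp_diagonal:
  assumes "\<And>i. X *v b i = d i *\<^sub>R b i"
  shows "(\<Sum>i\<in>UNIV. g i * (inner (mexp X *v v) (b i))\<^sup>2)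
    = (\<Sum>i\<in>supp b v. (inner v (b i))\<^sup>2 * exp (2 * d i) * g i)"
proof -
  have "inner (mexp X *v v) (b i) = exp (d i) * inner v (b i)" for i
    using mexp_diagonal[OF assms] by (rule diagonal_coordinate)
  then have "(\<Sum>i\<in>UNIV. g i * (inner (mexp X *v v) (b i))\<^sup>2)
      = (\<Sum>i\<in>UNIV. (inner v (b i))\<^sup>2 * exp (2 * d i) * g i)"
    by (simp add: power_mult_distrib mult_ac flip: exp_double)
  also have "\<dots> = (\<Sum>i\<in>supp b v. (inner v (b i))\<^sup>2 * exp (2 * d i) * g i)"
    by (intro sum.mono_neutral_right) (auto simp: supp_def)
  finally show ?thesis .
qed

lemma orbit_moment_sequence:
  assumes "subspace \<aa>" and diag: "\<And>i \<xi>. \<xi> \<in> \<aa> \<Longrightarrow> \<xi> *v b i = \<alpha> i \<xi> *\<^sub>R b i"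
    and s: "\<And>i. i \<in> supp b v \<Longrightarrow> s i \<ge> 0"
  obtains \<xi> where "\<And>k. \<xi> k \<in> \<aa>" "bounded (range (\<lambda>k. mexp (\<xi> k) *v v))"
    "\<And>\<eta>. \<eta> \<in> \<aa> \<Longrightarrow> (\<lambda>k. inner (\<eta> *v (mexp (\<xi> k) *v v)) (mexp (\<xi> k) *v v))
        \<longlonglongrightarrow> (\<Sum>i\<in>supp b v. s i * \<alpha> i \<eta>)"
proof -
  \<comment> \<open>\<open>\<alpha> i\<close> is only specified on \<open>\<aa>\<close>; \<open>w i\<close> extends it linearly to all matrices.\<close>
  define w where "w i \<xi> = inner (\<xi> *v b i) (b i)" for i and \<xi> :: "real^'n^'n"
  have w_eq: "w i \<xi> = \<alpha> i \<xi>" if "\<xi> \<in> \<aa>" for i \<xi>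
    using diag[OF that] by (simp add: w_def inner_frame)
  have w_linear: "linear (w i)" for i
    by (rule linearI)
      (simp_all add: w_def matrix_vector_mult_add_rdistrib inner_add_left flip: scaleR_matrix_vector_assoc)
  have pos: "(inner v (b i))\<^sup>2 > 0" if "i \<in> supp b v" for i
    using that by (simp add: supp_def)
  obtain \<xi> :: "nat \<Rightarrow> real^'n^'n" and B where \<xi>: "\<And>k. \<xi> k \<in> \<aa>"
    and bound: "\<And>k. (\<Sum>i\<in>supp b v. (inner v (b i))\<^sup>2 * exp (2 * w i (\<xi> k))) \<le> B"
    and lim: "\<And>\<eta>. \<eta> \<in> \<aa> \<Longrightarrow> (\<lambda>k. \<Sum>i\<in>supp b v. (inner v (b i))\<^sup>2 * exp (2 * w i (\<xi> k)) * w i \<eta>)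
        \<longlonglongrightarrow> (\<Sum>i\<in>supp b v. s i * w i \<eta>)"
    using exp_sum_critical_sequence[where a = w and I = "supp b v" and C = "\<lambda>i. (inner v (b i))\<^sup>2"
        and s = s, OF \<open>subspace \<aa>\<close> w_linear pos s]
    by blast
  define xs where "xs k = mexp (\<xi> k) *v v" for k
  have sums: "(\<Sum>i\<in>UNIV. g i * (inner (xs k) (b i))\<^sup>2)
      = (\<Sum>i\<in>supp b v. (inner v (b i))\<^sup>2 * exp (2 * w i (\<xi> k)) * g i)" for g k
    unfolding xs_def using diag[OF \<xi>(1)] w_eq[OF \<xi>(1)]
    by (intro weighted_sum_sq_mexp_diagonal) simp
  have "norm (xs k) \<le> sqrt B" for k
    using sums[of "\<lambda>_. 1" k] bound[of k] by (intro real_le_rsqrt) (simp add: norm_frame)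
  then have "bounded (range xs)"
    by (auto simp: bounded_iff)
  moreover have "(\<lambda>k. inner (\<eta> *v xs k) (xs k)) \<longlonglongrightarrow> (\<Sum>i\<in>supp b v. s i * \<alpha> i \<eta>)" if "\<eta> \<in> \<aa>" for \<eta>
  proof -
    have "inner (\<eta> *v xs k) (xs k) = (\<Sum>i\<in>UNIV. w i \<eta> * (inner (xs k) (b i))\<^sup>2)" for k
      using diag[OF that] w_eq[OF that] by (intro diagonal_quadratic_form) simp
    then show ?thesis
      using lim[OF that] by (simp add: sums w_eq[OF that])
  qed
  ultimately show thesis
    using that[OF \<xi>] by (simp add: xs_def)
qed

lemma cone_subset_moment_map_image:
  assumes "subspace \<aa>" and diag: "\<And>i \<xi>. \<xi> \<in> \<aa> \<Longrightarrow> \<xi> *v b i = \<alpha> i \<xi> *\<^sub>R b i"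
    and "closed M" and invariant: "\<And>\<xi> x. \<xi> \<in> \<aa> \<Longrightarrow> x \<in> M \<Longrightarrow> mexp \<xi> *v x \<in> M" and "v \<in> M"
  shows "cone \<aa> \<alpha> (supp b v) \<subseteq> moment_map \<aa> ` M"
proof
  fix y assume "y \<in> cone \<aa> \<alpha> (supp b v)"
  then obtain s where y: "y = restrict (\<lambda>\<xi>. \<Sum>i\<in>supp b v. s i * \<alpha> i \<xi>) \<aa>"
    and s: "\<And>i. i \<in> supp b v \<Longrightarrow> s i \<ge> 0"
    unfolding cone_def by blast
  obtain \<xi> where \<xi>: "\<And>k. \<xi> k \<in> \<aa>" and bounded: "bounded (range (\<lambda>k. mexp (\<xi> k) *v v))"
    and lim: "\<And>\<eta>. \<eta> \<in> \<aa> \<Longrightarrow> (\<lambda>k. inner (\<eta> *v (mexp (\<xi> k) *v v)) (mexp (\<xi> k) *v v))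
        \<longlonglongrightarrow> (\<Sum>i\<in>supp b v. s i * \<alpha> i \<eta>)"
    using orbit_moment_sequence[where v = v and s = s, OF \<open>subspace \<aa>\<close> diag s] by blast
  have "mexp (\<xi> k) *v v \<in> M" for k
    using invariant[OF \<xi> \<open>v \<in> M\<close>] .
  then obtain l where "l \<in> M" "moment_map \<aa> l = y"
    unfolding y using bounded lim by (rule moment_map_limit_in_closed[OF \<open>closed M\<close>])
  then show "y \<in> moment_map \<aa> ` M"
    by blast
qed

end

theorem mainTheorem7:
  fixes \<aa> :: "(real^'n^'n) set"
    and b :: "'n \<Rightarrow> real^'n"
    and \<alpha> :: "'n \<Rightarrow> real^'n^'n \<Rightarrow> real"
    and M :: "(real^'n) set"
  assumes a_subspace: "subspace \<aa>"
    and a_sym: "\<forall>\<xi>\<in>\<aa>. transpose \<xi> = \<xi>"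
    and a_abelian: "\<forall>\<xi>\<in>\<aa>. \<forall>\<eta>\<in>\<aa>. \<xi> ** \<eta> = \<eta> ** \<xi>"
    and b_orthonormal: "\<forall>i j. inner (b i) (b j) = (if i = j then 1 else 0)"
    and b_diag: "\<forall>i. \<forall>\<xi>\<in>\<aa>. \<xi> *v b i = \<alpha> i \<xi> *\<^sub>R b i"
    and M_nonempty: "M \<noteq> {}"
    and M_closed: "zariski_closed M"
    and M_irred: "zariski_irreducible M"
    and M_invariant: "\<forall>\<xi>\<in>\<aa>. \<forall>x\<in>M. mexp \<xi> *v x \<in> M"
  shows "\<exists>v\<in>M. moment_map \<aa> ` M = cone \<aa> \<alpha> (supp b v)"
proof -
  interpret orthonormal_frame b
    using b_orthonormal by unfold_locales blast
  obtain v where v: "v \<in> M" "\<And>x. x \<in> M \<Longrightarrow> supp b x \<subseteq> supp b v"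
    using zariski_irreducible_generic_supp[OF M_irred] by blast
  have "moment_map \<aa> ` M \<subseteq> cone \<aa> \<alpha> (supp b v)"
    using b_diag v(2) by (intro moment_map_image_subset_cone) auto
  moreover have "cone \<aa> \<alpha> (supp b v) \<subseteq> moment_map \<aa> ` M"
    using b_diag M_invariant
    by (intro cone_subset_moment_map_image[OF a_subspace _ zariski_closed_imp_closed[OF M_closed] _ v(1)])
      auto
  ultimately show ?thesis
    using v(1) by blast
qed

end
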